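(* Let $(M,\varphi,\xi,\eta,g)$ be a $3$-dimensional $C_{12}$-manifold with Levi-Civita connection $\nabla$, let $\omega=-g(\nabla_\xi\xi,\cdot)$, let $\psi$ be the $g$-dual vector field of $\omega$, and assume that $\omega$ is closed and that $\psi$ vanishes nowhere. Write $|\psi|={\rm e}^{\rho}$ and $V={\rm e}^{-\rho}\psi$. Then (1) $\nabla_{\varphi V}V=(-{\rm e}^{\rho}+\operatorname{div}V)\,\varphi V$; (2) $\nabla_{\varphi V}\varphi V=({\rm e}^{\rho}-\operatorname{div}V)\,V$.
   Context: An almost contact metric manifold $(M^{2n+1},\varphi,\xi,\eta,g)$ consists of a Riemannian metric $g$, a $(1,1)$-tensor field $\varphi$, a vector field $\xi$ and a $1$-form $\eta$ with $\eta(\xi)=1$, $\varphi^2X=-X+\eta(X)\xi$, $g(\varphi X,\varphi Y)=g(X,Y)-\eta(X)\eta(Y)$. It is a $C_{12}$-manifold if its Levi-Civita connection satisfies $(\nabla_X\varphi)Y=\eta(X)\big(\omega(\varphi Y)\xi+\eta(Y)\varphi\psi\big)$ for all vector fields $X,Y$, where $\omega=-g(\nabla_\xi\xi,\cdot)$ and $\psi$ is the $g$-dual of $\omega$. Under the stated assumptions $\{\xi,V,\varphi V\}$ is an orthonormal frame. $\operatorname{div}V$ is the Riemannian divergence of $V$. *)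

theory Defs
  imports "HOL-Analysis.Analysis"
begin

text \<open>Local-coordinate model of a 3-dimensional Riemannian manifold: an open set U of
  real^3 (a chart domain). Vectors at a point are elements of real^3, the metric is a
  matrix field G, (1,1)-tensors are matrix fields, 1-forms are covector fields
  (represented by their component vectors, alpha(X) = a p \<bullet> X).\<close>

type_synonym vec3 = "real^3"

definition partial :: "3 \<Rightarrow> (vec3 \<Rightarrow> real) \<Rightarrow> vec3 \<Rightarrow> real" where
  "partial i f p = frechet_derivative f (at p) (axis i 1)"

fun Ck :: "nat \<Rightarrow> vec3 set \<Rightarrow> (vec3 \<Rightarrow> real) \<Rightarrow> bool" where
  "Ck 0 U f = continuous_on U f"
| "Ck (Suc k) U f = ((\<forall>p\<in>U. f differentiable (at p)) \<and> (\<forall>i. Ck k U (partial i f)))"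

definition smooth_fun :: "vec3 set \<Rightarrow> (vec3 \<Rightarrow> real) \<Rightarrow> bool" where
  "smooth_fun U f = (\<forall>k. Ck k U f)"

definition smooth_vf :: "vec3 set \<Rightarrow> (vec3 \<Rightarrow> vec3) \<Rightarrow> bool" where
  "smooth_vf U X = (\<forall>i. smooth_fun U (\<lambda>p. X p $ i))"

definition smooth_tf :: "vec3 set \<Rightarrow> (vec3 \<Rightarrow> real^3^3) \<Rightarrow> bool" where
  "smooth_tf U A = (\<forall>i j. smooth_fun U (\<lambda>p. A p $ i $ j))"

definition gm :: "(vec3 \<Rightarrow> real^3^3) \<Rightarrow> vec3 \<Rightarrow> vec3 \<Rightarrow> vec3 \<Rightarrow> real" where
  "gm G p u v = u \<bullet> (G p *v v)"

definition riemannian_metric :: "vec3 set \<Rightarrow> (vec3 \<Rightarrow> real^3^3) \<Rightarrow> bool" where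
  "riemannian_metric U G \<longleftrightarrow> smooth_tf U G \<and>
     (\<forall>p\<in>U. transpose (G p) = G p \<and> (\<forall>v. v \<noteq> 0 \<longrightarrow> gm G p v v > 0))"

definition christoffel :: "(vec3 \<Rightarrow> real^3^3) \<Rightarrow> vec3 \<Rightarrow> 3 \<Rightarrow> 3 \<Rightarrow> 3 \<Rightarrow> real" where
  "christoffel G p i j k = (1/2) * (\<Sum>l\<in>UNIV. matrix_inv (G p) $ k $ l *
      (partial i (\<lambda>q. G q $ j $ l) p + partial j (\<lambda>q. G q $ i $ l) p
       - partial l (\<lambda>q. G q $ i $ j) p))"

text \<open>Levi-Civita covariant derivative (nabla_X Y)(p) of a vector field Y in the
  direction of the tangent vector X at p.\<close>
definition LC :: "(vec3 \<Rightarrow> real^3^3) \<Rightarrow> (vec3 \<Rightarrow> vec3) \<Rightarrow> vec3 \<Rightarrow> vec3 \<Rightarrow> vec3" where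
  "LC G Y p X = (\<chi> k. frechet_derivative Y (at p) X $ k +
      (\<Sum>i\<in>UNIV. \<Sum>j\<in>UNIV. christoffel G p i j k * X $ i * Y p $ j))"

definition divergence :: "(vec3 \<Rightarrow> real^3^3) \<Rightarrow> (vec3 \<Rightarrow> vec3) \<Rightarrow> vec3 \<Rightarrow> real" where
  "divergence G Y p = (\<Sum>i\<in>UNIV. LC G Y p (axis i 1) $ i)"

text \<open>(nabla_X phi) Y at p, for vector fields X, Y.\<close>
definition LC_tf :: "(vec3 \<Rightarrow> real^3^3) \<Rightarrow> (vec3 \<Rightarrow> real^3^3) \<Rightarrow> (vec3 \<Rightarrow> vec3)
    \<Rightarrow> (vec3 \<Rightarrow> vec3) \<Rightarrow> vec3 \<Rightarrow> vec3" where
  "LC_tf G Phi X Y p = LC G (\<lambda>q. Phi q *v Y q) p (X p) - Phi p *v LC G Y p (X p)"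

definition almost_contact_metric ::
  "vec3 set \<Rightarrow> (vec3 \<Rightarrow> real^3^3) \<Rightarrow> (vec3 \<Rightarrow> vec3) \<Rightarrow> (vec3 \<Rightarrow> vec3) \<Rightarrow> (vec3 \<Rightarrow> real^3^3) \<Rightarrow> bool"
  where
  "almost_contact_metric U Phi xi eta G \<longleftrightarrow>
     riemannian_metric U G \<and> smooth_tf U Phi \<and> smooth_vf U xi \<and> smooth_vf U eta \<and>
     (\<forall>p\<in>U. eta p \<bullet> xi p = 1 \<and>
        (\<forall>X. Phi p *v (Phi p *v X) = - X + (eta p \<bullet> X) *\<^sub>R xi p) \<and>
        (\<forall>X Y. gm G p (Phi p *v X) (Phi p *v Y) = gm G p X Y - (eta p \<bullet> X) * (eta p \<bullet> Y)))"

definition omega_cov :: "(vec3 \<Rightarrow> real^3^3) \<Rightarrow> (vec3 \<Rightarrow> vec3) \<Rightarrow> vec3 \<Rightarrow> vec3" where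
  "omega_cov G xi p = (\<chi> j. - gm G p (LC G xi p (xi p)) (axis j 1))"

definition psi_vf :: "(vec3 \<Rightarrow> real^3^3) \<Rightarrow> (vec3 \<Rightarrow> vec3) \<Rightarrow> vec3 \<Rightarrow> vec3" where
  "psi_vf G xi p = matrix_inv (G p) *v omega_cov G xi p"

definition C12_manifold ::
  "vec3 set \<Rightarrow> (vec3 \<Rightarrow> real^3^3) \<Rightarrow> (vec3 \<Rightarrow> vec3) \<Rightarrow> (vec3 \<Rightarrow> vec3) \<Rightarrow> (vec3 \<Rightarrow> real^3^3) \<Rightarrow> bool"
  where
  "C12_manifold U Phi xi eta G \<longleftrightarrow> almost_contact_metric U Phi xi eta G \<and>
     (\<forall>X Y. smooth_vf U X \<longrightarrow> smooth_vf U Y \<longrightarrow> (\<forall>p\<in>U.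
        LC_tf G Phi X Y p = (eta p \<bullet> X p) *\<^sub>R
          ((omega_cov G xi p \<bullet> (Phi p *v Y p)) *\<^sub>R xi p
           + (eta p \<bullet> Y p) *\<^sub>R (Phi p *v psi_vf G xi p))))"

definition closed_form :: "vec3 set \<Rightarrow> (vec3 \<Rightarrow> vec3) \<Rightarrow> bool" where
  "closed_form U a \<longleftrightarrow> (\<forall>p\<in>U. \<forall>i j. partial i (\<lambda>q. a q $ j) p = partial j (\<lambda>q. a q $ i) p)"

end

theory Submission
  imports Defs
begin

(* At every point, xi, V and phi V form a g-orthonormal frame. Along the horizontal direction
   phi V the C12 condition says that nabla phi vanishes, so nabla_{phi V} xi = 0 and
   nabla_{phi V} (phi V) = phi (nabla_{phi V} V). By metric compatibility nabla_{phi V} V has no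
   component along xi (g(nabla V, xi) = - g(V, nabla xi) = 0) nor along V (|V| = 1), hence
   nabla_{phi V} V = a phi V with a = g(nabla_{phi V} V, phi V). Computing div V in the frame,
   g(nabla_xi V, xi) = - g(V, nabla_xi xi) = g(V, psi) = e^rho and g(nabla_V V, V) = 0, so
   a = div V - e^rho; finally nabla_{phi V} (phi V) = a phi^2 V = - a V. *)

section \<open>Calculus on open sets of real^n\<close>

lemma differentiable_transform_open:
  assumes "f differentiable (at p)" "open U" "p \<in> U" "\<forall>q\<in>U. f q = g q"
  shows "g differentiable (at p)"
  using assms unfolding differentiable_def by (metis has_derivative_transform_within_open)

lemma frechet_derivative_transform_open:
  assumes "f differentiable (at p)" "open U" "p \<in> U" "\<forall>q\<in>U. f q = g q"
  shows "frechet_derivative g (at p) = frechet_derivative f (at p)"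
proof -
  have "(f has_derivative frechet_derivative f (at p)) (at p)"
    using assms(1) frechet_derivative_works by blast
  then have "(g has_derivative frechet_derivative f (at p)) (at p)"
    using has_derivative_transform_within_open assms(2-4) by metis
  then show ?thesis using frechet_derivative_at by metis
qed

lemma has_derivative_locally_constant:
  assumes "(f has_derivative D) (at p)" "open U" "p \<in> U" "\<forall>q\<in>U. f q = c"
  shows "D = (\<lambda>_. 0)"
proof -
  have "((\<lambda>_. c) has_derivative D) (at p)"
    using has_derivative_transform_within_open[OF assms(1-3)] assms(4) by simp
  moreover have "((\<lambda>_. c) has_derivative (\<lambda>_. 0)) (at p)" by simp
  ultimately show ?thesis using has_derivative_unique by blast
qed

lemma has_derivative_vec_nth_iff:
  "((f :: 'a::real_normed_vector \<Rightarrow> real^'n) has_derivative D) (at p) \<longleftrightarrow>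
   (\<forall>k. ((\<lambda>q. f q $ k) has_derivative (\<lambda>h. D h $ k)) (at p))"
  using has_derivative_componentwise_within[of f D p UNIV]
  by (auto simp: Basis_vec_def inner_axis)

lemma differentiable_vec_nth_iff:
  "((f :: 'a::real_normed_vector \<Rightarrow> real^'n) differentiable (at p)) \<longleftrightarrow>
   (\<forall>k. (\<lambda>q. f q $ k) differentiable (at p))"
  using differentiable_componentwise_within[of f p UNIV]
  by (auto simp: Basis_vec_def inner_axis)

lemma has_derivative_vec_nth_frechet:
  assumes "(f :: 'a::real_normed_vector \<Rightarrow> real^'n) differentiable (at p)"
  shows "((\<lambda>q. f q $ k) has_derivative (\<lambda>h. frechet_derivative f (at p) h $ k)) (at p)"
  using assms frechet_derivative_works bounded_linear.has_derivative[OF bounded_linear_vec_nth]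
  by blast

lemma frechet_derivative_vec_nth:
  assumes "(f :: 'a::real_normed_vector \<Rightarrow> real^'n) differentiable (at p)"
  shows "frechet_derivative f (at p) h $ k = frechet_derivative (\<lambda>q. f q $ k) (at p) h"
  using frechet_derivative_at[OF has_derivative_vec_nth_frechet[OF assms]] by (rule fun_cong)

lemma frechet_derivative_eq_partial_sum:
  assumes "(f :: vec3 \<Rightarrow> real) differentiable (at p)"
  shows "frechet_derivative f (at p) h = (\<Sum>i\<in>UNIV. h $ i * partial i f p)"
proof -
  have "frechet_derivative f (at p) h =
      frechet_derivative f (at p) (\<Sum>i\<in>UNIV. h $ i *\<^sub>R axis i 1)"
    using basis_expansion[of h] by (simp add: scalar_mult_eq_scaleR)
  also have "\<dots> = (\<Sum>i\<in>UNIV. h $ i * frechet_derivative f (at p) (axis i 1))"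
    using linear_frechet_derivative[OF assms] by (simp add: linear_sum linear_cmul)
  finally show ?thesis by (simp add: partial_def)
qed

lemma has_derivative_matrix_vector_mult:
  fixes A :: "'a::real_normed_vector \<Rightarrow> real^'n^'m" and Y :: "'a \<Rightarrow> real^'n"
  assumes "\<And>i j. (\<lambda>q. A q $ i $ j) differentiable (at p)" and "Y differentiable (at p)"
  shows "((\<lambda>q. A q *v Y q) has_derivative (\<lambda>h.
     (\<chi> i. \<Sum>j\<in>UNIV. frechet_derivative (\<lambda>q. A q $ i $ j) (at p) h * Y p $ j)
       + A p *v frechet_derivative Y (at p) h)) (at p)"
  unfolding has_derivative_vec_nth_iff
proof
  fix i
  have "((\<lambda>q. \<Sum>j\<in>UNIV. A q $ i $ j * Y q $ j) has_derivative (\<lambda>h. \<Sum>j\<in>UNIV.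
      A p $ i $ j * frechet_derivative Y (at p) h $ j
      + frechet_derivative (\<lambda>q. A q $ i $ j) (at p) h * Y p $ j)) (at p)"
    using assms(1) frechet_derivative_works
    by (intro has_derivative_sum has_derivative_mult has_derivative_vec_nth_frechet[OF assms(2)])
      auto
  then show "((\<lambda>q. (A q *v Y q) $ i) has_derivative (\<lambda>h. ((\<chi> i. \<Sum>j\<in>UNIV.
      frechet_derivative (\<lambda>q. A q $ i $ j) (at p) h * Y p $ j)
      + A p *v frechet_derivative Y (at p) h) $ i)) (at p)"
    by (simp add: matrix_vector_mult_def sum.distrib algebra_simps)
qed

lemma Ck_const: "Ck k U (\<lambda>_. c)"
proof (induction k arbitrary: c)
  case 0
  then show ?case by simp
next
  case (Suc k)
  have "partial i (\<lambda>_. c) = (\<lambda>_. 0)" for i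
    by (rule ext) (simp add: partial_def)
  then show ?case using Suc by simp
qed

lemma smooth_vf_const: "smooth_vf U (\<lambda>_. c)"
  by (simp add: smooth_vf_def smooth_fun_def Ck_const)

lemma smooth_fun_differentiable:
  assumes "smooth_fun U f" "p \<in> U"
  shows "f differentiable (at p)" "partial i f differentiable (at p)"
proof -
  have "Ck 2 U f" using assms(1) smooth_fun_def by blast
  then show "f differentiable (at p)" "partial i f differentiable (at p)"
    using assms(2) by (simp_all add: numeral_2_eq_2)
qed

lemma smooth_vf_differentiable: "smooth_vf U X \<Longrightarrow> p \<in> U \<Longrightarrow> X differentiable (at p)"
  unfolding smooth_vf_def differentiable_vec_nth_iff using smooth_fun_differentiable by blast

lemma smooth_tf_differentiable:
  "smooth_tf U A \<Longrightarrow> p \<in> U \<Longrightarrow> (\<lambda>q. A q $ i $ j) differentiable (at p)"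
  unfolding smooth_tf_def using smooth_fun_differentiable by blast

lemma matrix_inv_mult:
  assumes "invertible (A :: real^'n^'n)"
  shows "A ** matrix_inv A = mat 1" "matrix_inv A ** A = mat 1"
proof -
  have "\<exists>A'. A ** A' = mat 1 \<and> A' ** A = mat 1" using assms invertible_def by blast
  then have "A ** matrix_inv A = mat 1 \<and> matrix_inv A ** A = mat 1"
    unfolding matrix_inv_def by (rule someI_ex)
  then show "A ** matrix_inv A = mat 1" "matrix_inv A ** A = mat 1" by auto
qed

lemma matrix_inv_entry_cramer:
  assumes "det (A :: real^3^3) \<noteq> 0"
  shows "matrix_inv A $ k $ l = det (\<chi> i j. if j = k then axis l 1 $ i else A $ i $ j) / det A"
proof -
  have "invertible A" using assms invertible_det_nz by blast
  then have "A *v (matrix_inv A *v axis l 1) = axis l 1"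
    by (simp add: matrix_vector_mul_assoc matrix_inv_mult(1))
  then have "matrix_inv A *v axis l 1 =
      (\<chi> k. det (\<chi> i j. if j = k then axis l 1 $ i else A $ i $ j) / det A)"
    using cramer[OF assms] by blast
  moreover have "(matrix_inv A *v axis l 1) $ k = matrix_inv A $ k $ l"
    by (simp add: matrix_vector_mult_basis column_def)
  ultimately show ?thesis by simp
qed

lemma differentiable_det3:
  assumes "\<And>i j. (\<lambda>q. A q $ i $ j) differentiable (at p)"
  shows "(\<lambda>q. det (A q :: real^3^3)) differentiable (at p)"
  unfolding det_3 by (intro differentiable_add differentiable_diff differentiable_mult assms)

lemma differentiable_matrix_inv_entry:
  fixes A :: "vec3 \<Rightarrow> real^3^3"
  assumes "open U" "p \<in> U" and "\<forall>q\<in>U. det (A q) \<noteq> 0"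
    and "\<And>i j. (\<lambda>q. A q $ i $ j) differentiable (at p)"
  shows "(\<lambda>q. matrix_inv (A q) $ k $ l) differentiable (at p)"
proof -
  define A' where "A' q = (\<chi> i j. if j = k then axis l 1 $ i else A q $ i $ j)" for q
  define F where "F q = det (A' q) / det (A q)" for q
  have "(\<lambda>q. det (A' q)) differentiable (at p)"
  proof (rule differentiable_det3)
    show "(\<lambda>q. A' q $ i $ j) differentiable (at p)" for i j
      using assms(4) by (cases "j = k") (simp_all add: A'_def)
  qed
  then have "F differentiable (at p)"
    unfolding F_def using differentiable_det3[OF assms(4)] assms(2,3)
    by (intro differentiable_divide) auto
  moreover have "\<forall>q\<in>U. F q = matrix_inv (A q) $ k $ l"
    using assms(3) matrix_inv_entry_cramer by (simp add: F_def A'_def)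
  ultimately show ?thesis
    by (rule differentiable_transform_open[OF _ assms(1,2)])
qed

section \<open>The metric at a point\<close>

lemma gm_add_left: "gm G p (u + v) w = gm G p u w + gm G p v w"
  by (simp add: gm_def inner_add_left)
lemma gm_add_right: "gm G p w (u + v) = gm G p w u + gm G p w v"
  by (simp add: gm_def inner_add_right matrix_vector_right_distrib)
lemma gm_scale_left: "gm G p (c *\<^sub>R u) w = c * gm G p u w"
  by (simp add: gm_def)
lemma gm_scale_right: "gm G p w (c *\<^sub>R u) = c * gm G p w u"
  by (simp add: gm_def matrix_vector_mult_scaleR)
lemma gm_minus_left: "gm G p (- u) w = - gm G p u w"
  by (simp add: gm_def)
lemma gm_minus_right: "gm G p w (- u) = - gm G p w u"
  by (simp add: gm_def linear_neg[OF matrix_vector_mul_linear])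
lemma gm_diff_left: "gm G p (u - v) w = gm G p u w - gm G p v w"
  by (simp add: gm_def inner_diff_left)
lemma gm_diff_right: "gm G p w (u - v) = gm G p w u - gm G p w v"
  by (simp add: gm_def inner_diff_right matrix_vector_mult_diff_distrib)
lemma gm_zero_left: "gm G p 0 w = 0"
  by (simp add: gm_def)
lemma gm_zero_right: "gm G p w 0 = 0"
  by (simp add: gm_def)

lemmas gm_linear = gm_add_left gm_add_right gm_scale_left gm_scale_right gm_minus_left
  gm_minus_right gm_diff_left gm_diff_right gm_zero_left gm_zero_right

lemma gm_expand: "gm G q u v = (\<Sum>j\<in>UNIV. \<Sum>m\<in>UNIV. u $ j * G q $ j $ m * v $ m)"
  by (simp add: gm_def inner_vec_def matrix_vector_mult_def sum_distrib_left mult.assoc)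

lemma gm_axis_sum: "(\<Sum>i\<in>UNIV. gm G p u (axis i 1) * w $ i) = gm G p u w"
proof -
  have "(\<Sum>i\<in>UNIV. gm G p u (axis i 1) * w $ i) =
      (\<Sum>i\<in>UNIV. \<Sum>j\<in>UNIV. u $ j * G p $ j $ i * w $ i)"
    by (simp add: gm_def matrix_vector_mult_basis column_def inner_vec_def sum_distrib_right)
  also have "\<dots> = gm G p u w"
    by (subst sum.swap) (simp add: gm_expand)
  finally show ?thesis .
qed

lemma symmetric_matrix_entry: "transpose A = A \<Longrightarrow> A $ k $ m = A $ m $ k"
  by (metis transpose_def vec_lambda_beta)

lemma gm_commute:
  assumes "transpose (G p) = G p"
  shows "gm G p u v = gm G p v u"
  unfolding gm_expand using symmetric_matrix_entry[OF assms]
  by (subst sum.swap) (simp add: mult_ac)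

lemma invertible_if_gm_pos:
  assumes "\<forall>v. v \<noteq> 0 \<longrightarrow> gm G q v v > 0"
  shows "invertible (G q)"
proof -
  have "inj ((*v) (G q))"
  proof (rule injI)
    fix u v
    assume "G q *v u = G q *v v"
    then have "gm G q (u - v) (u - v) = 0"
      by (simp add: gm_def matrix_vector_mult_diff_distrib)
    then show "u = v" using assms by (metis less_irrefl right_minus_eq)
  qed
  then have "det (matrix ((*v) (G q))) \<noteq> 0"
    using det_nz_iff_inj[of "(*v) (G q)"] by simp
  then show ?thesis by (simp add: invertible_det_nz)
qed

definition orthonormal3 :: "(vec3 \<Rightarrow> real^3^3) \<Rightarrow> vec3 \<Rightarrow> vec3 \<Rightarrow> vec3 \<Rightarrow> vec3 \<Rightarrow> bool" where
  "orthonormal3 G p b1 b2 b3 \<longleftrightarrow>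
     gm G p b1 b1 = 1 \<and> gm G p b2 b2 = 1 \<and> gm G p b3 b3 = 1 \<and>
     gm G p b1 b2 = 0 \<and> gm G p b1 b3 = 0 \<and> gm G p b2 b3 = 0"

lemma orthonormal3_expansion:
  assumes "transpose (G p) = G p" and "orthonormal3 G p b1 b2 b3"
  shows "W = gm G p b1 W *\<^sub>R b1 + gm G p b2 W *\<^sub>R b2 + gm G p b3 W *\<^sub>R b3"
proof -
  define b :: "3 \<Rightarrow> vec3" where "b a = (if a = 1 then b1 else if a = 2 then b2 else b3)" for a
  have b_simps: "b 1 = b1" "b 2 = b2" "b 3 = b3" by (simp_all add: b_def)
  have orth: "gm G p (b a) (b c) = (if a = c then 1 else 0)" for a c
    using assms gm_commute[of G p, OF assms(1)] exhaust_3[of a] exhaust_3[of c]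
    by (auto simp: b_def orthonormal3_def)
  \<comment> \<open>B has the frame as columns and C is its g-adjoint; C B = 1 forces B C = 1.\<close>
  define B :: "real^3^3" where "B = (\<chi> i a. b a $ i)"
  define C :: "real^3^3" where "C = (\<chi> a i. gm G p (b a) (axis i 1))"
  have "C ** B = mat 1"
    by (simp add: C_def B_def matrix_matrix_mult_def gm_axis_sum vec_eq_iff orth mat_def)
  then have "B ** C = mat 1" using matrix_left_right_inverse by blast
  then have "W = B *v (C *v W)" by (simp add: matrix_vector_mul_assoc)
  moreover have "(C *v W) $ a = gm G p (b a) W" for a
    by (simp add: C_def matrix_vector_mult_def gm_axis_sum)
  moreover have "(B *v y) $ k = b 1 $ k * y $ 1 + b 2 $ k * y $ 2 + b 3 $ k * y $ 3" for y k
    by (simp add: B_def matrix_vector_mult_def sum_3)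
  ultimately show ?thesis
    by (simp add: vec_eq_iff b_simps mult.commute)
qed

lemma orthonormal3_trace:
  assumes "transpose (G p) = G p" and "orthonormal3 G p b1 b2 b3" and "linear L"
  shows "(\<Sum>i\<in>UNIV. L (axis i 1) $ i) =
    gm G p (L b1) b1 + gm G p (L b2) b2 + gm G p (L b3) b3"
proof -
  have "L (axis i 1) = gm G p b1 (axis i 1) *\<^sub>R L b1 + gm G p b2 (axis i 1) *\<^sub>R L b2
      + gm G p b3 (axis i 1) *\<^sub>R L b3" for i
    using arg_cong[where f = L, OF orthonormal3_expansion[OF assms(1,2), of "axis i 1"]]
    by (simp only: linear_add[OF assms(3)] linear_cmul[OF assms(3)])
  then show ?thesis
    by (simp add: sum.distrib gm_axis_sum gm_commute[of G p, OF assms(1)])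
qed

lemma almost_contact_algebra:
  fixes P :: "real^3^3" and x e :: vec3
  assumes ex: "e \<bullet> x = 1"
    and PP: "\<forall>X. P *v (P *v X) = - X + (e \<bullet> X) *\<^sub>R x"
    and gP: "\<forall>X Y. gm G p (P *v X) (P *v Y) = gm G p X Y - (e \<bullet> X) * (e \<bullet> Y)"
  shows "P *v x = 0" "\<And>X. e \<bullet> (P *v X) = 0" "\<And>X. gm G p X x = e \<bullet> X"
    "\<And>X Y. gm G p (P *v X) Y = - gm G p X (P *v Y)"
proof -
  define w where "w = P *v x"
  have x: "x \<noteq> 0" using ex by auto
  have Pw: "P *v w = 0" using PP ex by (simp add: w_def)
  then have w: "w = (e \<bullet> w) *\<^sub>R x" using PP[rule_format, of w] by simp
  then have "(e \<bullet> w) *\<^sub>R ((e \<bullet> w) *\<^sub>R x) = 0"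
    using Pw by (metis matrix_vector_mult_scaleR w_def)
  then show Px: "P *v x = 0" using w x w_def by auto
  show eP: "e \<bullet> (P *v X) = 0" for X
  proof -
    have "P *v (P *v (P *v X)) = - (P *v X)"
      using PP Px by (simp add: matrix_vector_mult_diff_distrib matrix_vector_mult_scaleR)
    then have "(e \<bullet> (P *v X)) *\<^sub>R x = 0" using PP by (metis add_cancel_right_right)
    then show ?thesis using x by simp
  qed
  show gx: "gm G p X x = e \<bullet> X" for X
    using gP[rule_format, of X x] ex Px by (simp add: gm_zero_right)
  show "gm G p (P *v X) Y = - gm G p X (P *v Y)" for X Y
    using gP[rule_format, of X "P *v Y"] PP gx eP by (simp add: gm_linear)
qed

section \<open>Metric compatibility of the Levi-Civita connection\<close>

definition christoffel_form :: "(vec3 \<Rightarrow> real^3^3) \<Rightarrow> vec3 \<Rightarrow> vec3 \<Rightarrow> vec3 \<Rightarrow> vec3" where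
  "christoffel_form G p X Y =
     (\<chi> k. \<Sum>i\<in>UNIV. \<Sum>j\<in>UNIV. christoffel G p i j k * X $ i * Y $ j)"

lemma LC_eq: "LC G Y p X = frechet_derivative Y (at p) X + christoffel_form G p X (Y p)"
  by (simp add: LC_def christoffel_form_def vec_eq_iff)

lemma linear_christoffel_form: "linear (\<lambda>X. christoffel_form G p X Y)"
  by (rule linearI)
    (simp_all add: christoffel_form_def vec_eq_iff sum.distrib sum_distrib_left algebra_simps)

lemma linear_LC:
  assumes "Y differentiable (at p)"
  shows "linear (LC G Y p)"
proof -
  show ?thesis
    unfolding LC_eq[abs_def]
    using linear_compose_add linear_frechet_derivative[OF assms] linear_christoffel_form by blast
qed

lemma christoffel_lowered:
  assumes "G p ** matrix_inv (G p) = mat 1"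
  shows "(\<Sum>k\<in>UNIV. G p $ m $ k * christoffel G p i j k) = (1/2) *
     (partial i (\<lambda>q. G q $ j $ m) p + partial j (\<lambda>q. G q $ i $ m) p - partial m (\<lambda>q. G q $ i $ j) p)"
proof -
  define c where "c l = partial i (\<lambda>q. G q $ j $ l) p + partial j (\<lambda>q. G q $ i $ l) p
       - partial l (\<lambda>q. G q $ i $ j) p" for l
  have "(\<Sum>k\<in>UNIV. G p $ m $ k * christoffel G p i j k)
      = (1/2) * (\<Sum>k\<in>UNIV. \<Sum>l\<in>UNIV. G p $ m $ k * matrix_inv (G p) $ k $ l * c l)"
    by (simp add: christoffel_def c_def sum_distrib_left mult.assoc mult.left_commute)
  also have "\<dots> = (1/2) * (\<Sum>l\<in>UNIV. (\<Sum>k\<in>UNIV. G p $ m $ k * matrix_inv (G p) $ k $ l) * c l)"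
    by (subst sum.swap) (simp add: sum_distrib_right)
  also have "\<dots> = (1/2) * (\<Sum>l\<in>UNIV. (mat 1 :: real^3^3) $ m $ l * c l)"
    by (simp add: matrix_matrix_mult_def flip: assms)
  also have "\<dots> = (1/2) * (\<Sum>l\<in>UNIV. if m = l then c l else 0)"
    by (rule arg_cong[where f = "(*) (1/2)"], rule sum.cong) (auto simp: mat_def)
  also have "\<dots> = (1/2) * c m"
    by simp
  finally show ?thesis by (simp add: c_def)
qed

lemma sum_rotate3:
  "(\<Sum>a\<in>UNIV. \<Sum>b\<in>UNIV. \<Sum>c\<in>UNIV. f a b c) =
   (\<Sum>b\<in>UNIV. \<Sum>c\<in>UNIV. \<Sum>a\<in>UNIV. (f a b c :: real))"
  by (subst sum.swap) (rule sum.cong[OF refl], rule sum.swap)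

lemma gm_christoffel_form_left:
  "gm G p (christoffel_form G p X y) z = (\<Sum>i\<in>UNIV. \<Sum>j\<in>UNIV. \<Sum>m\<in>UNIV.
     X $ i * y $ j * z $ m * (\<Sum>k\<in>UNIV. G p $ k $ m * christoffel G p i j k))" (is "_ = ?rhs")
proof -
  define F where "F k m i j = christoffel G p i j k * X $ i * y $ j * G p $ k $ m * z $ m" for k m i j
  have "gm G p (christoffel_form G p X y) z =
      (\<Sum>k\<in>UNIV. \<Sum>m\<in>UNIV. \<Sum>i\<in>UNIV. \<Sum>j\<in>UNIV. F k m i j)"
    by (simp add: gm_expand christoffel_form_def F_def sum_distrib_right)
  also have "\<dots> = (\<Sum>k\<in>UNIV. \<Sum>i\<in>UNIV. \<Sum>j\<in>UNIV. \<Sum>m\<in>UNIV. F k m i j)"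
    by (rule sum.cong[OF refl], rule sum_rotate3)
  also have "\<dots> = (\<Sum>i\<in>UNIV. \<Sum>j\<in>UNIV. \<Sum>k\<in>UNIV. \<Sum>m\<in>UNIV. F k m i j)"
    by (rule sum_rotate3)
  also have "\<dots> = (\<Sum>i\<in>UNIV. \<Sum>j\<in>UNIV. \<Sum>m\<in>UNIV. \<Sum>k\<in>UNIV. F k m i j)"
    by (rule sum.cong[OF refl], rule sum.cong[OF refl], rule sum.swap)
  also have "\<dots> = ?rhs"
    by (simp add: F_def sum_distrib_left mult_ac)
  finally show ?thesis .
qed

lemma gm_christoffel_form_right:
  "gm G p y (christoffel_form G p X z) = (\<Sum>i\<in>UNIV. \<Sum>j\<in>UNIV. \<Sum>m\<in>UNIV.
     X $ i * y $ j * z $ m * (\<Sum>k\<in>UNIV. G p $ j $ k * christoffel G p i m k))" (is "_ = ?rhs")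
proof -
  define F where "F j k i m = y $ j * G p $ j $ k * (christoffel G p i m k * X $ i * z $ m)" for j k i m
  have "gm G p y (christoffel_form G p X z) =
      (\<Sum>j\<in>UNIV. \<Sum>k\<in>UNIV. \<Sum>i\<in>UNIV. \<Sum>m\<in>UNIV. F j k i m)"
    by (simp add: gm_expand christoffel_form_def F_def sum_distrib_left)
  also have "\<dots> = (\<Sum>i\<in>UNIV. \<Sum>j\<in>UNIV. \<Sum>m\<in>UNIV. \<Sum>k\<in>UNIV. F j k i m)"
    by (subst sum.swap) (rule sum.cong[OF refl], rule sum_rotate3)
  also have "\<dots> = ?rhs"
    by (simp add: F_def sum_distrib_left mult_ac)
  finally show ?thesis .
qed

lemma christoffel_form_metric_compatible:
  assumes sym: "transpose (G p) = G p" and inv: "G p ** matrix_inv (G p) = mat 1"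
    and partial_sym: "\<And>i j m. partial i (\<lambda>q. G q $ j $ m) p = partial i (\<lambda>q. G q $ m $ j) p"
  shows "gm G p (christoffel_form G p X y) z + gm G p y (christoffel_form G p X z) =
     (\<Sum>j\<in>UNIV. \<Sum>m\<in>UNIV. y $ j * (\<Sum>i\<in>UNIV. X $ i * partial i (\<lambda>q. G q $ j $ m) p) * z $ m)"
proof -
  define d where "d i j m = partial i (\<lambda>q. G q $ j $ m) p" for i j m
  have left: "(\<Sum>k\<in>UNIV. G p $ k $ m * christoffel G p i j k) = (1/2) * (d i j m + d j i m - d m i j)"
    for i j m
  proof -
    have "(\<Sum>k\<in>UNIV. G p $ k $ m * christoffel G p i j k) =
        (\<Sum>k\<in>UNIV. G p $ m $ k * christoffel G p i j k)"
      using symmetric_matrix_entry[OF sym] by (intro sum.cong) auto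
    then show ?thesis using christoffel_lowered[of G p, OF inv] by (simp add: d_def)
  qed
  have right: "(\<Sum>k\<in>UNIV. G p $ j $ k * christoffel G p i m k) = (1/2) * (d i m j + d m i j - d j i m)"
    for i j m
    using christoffel_lowered[of G p, OF inv] by (simp add: d_def)
  have "gm G p (christoffel_form G p X y) z + gm G p y (christoffel_form G p X z) =
     (\<Sum>i\<in>UNIV. \<Sum>j\<in>UNIV. \<Sum>m\<in>UNIV.
        X $ i * y $ j * z $ m * ((1/2) * (d i j m + d j i m - d m i j))
        + X $ i * y $ j * z $ m * ((1/2) * (d i m j + d m i j - d j i m)))"
    unfolding gm_christoffel_form_left gm_christoffel_form_right left right
    by (simp only: sum.distrib)
  also have "\<dots> = (\<Sum>i\<in>UNIV. \<Sum>j\<in>UNIV. \<Sum>m\<in>UNIV. y $ j * (X $ i * d i j m) * z $ m)"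
  proof (intro sum.cong refl)
    fix i j m
    have "d i m j = d i j m" using partial_sym by (simp add: d_def)
    then show "X $ i * y $ j * z $ m * ((1/2) * (d i j m + d j i m - d m i j))
        + X $ i * y $ j * z $ m * ((1/2) * (d i m j + d m i j - d j i m))
        = y $ j * (X $ i * d i j m) * z $ m"
      by (simp add: algebra_simps)
  qed
  also have "\<dots> = (\<Sum>j\<in>UNIV. \<Sum>m\<in>UNIV. y $ j * (\<Sum>i\<in>UNIV. X $ i * d i j m) * z $ m)"
    by (subst sum_rotate3) (simp add: sum_distrib_left sum_distrib_right)
  finally show ?thesis by (simp add: d_def)
qed

lemma partial_symmetric_matrix:
  fixes G :: "vec3 \<Rightarrow> real^3^3"
  assumes "open U" "p \<in> U" "\<forall>q\<in>U. transpose (G q) = G q"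
    and "(\<lambda>q. G q $ m $ j) differentiable (at p)"
  shows "partial i (\<lambda>q. G q $ j $ m) p = partial i (\<lambda>q. G q $ m $ j) p"
proof -
  have "\<forall>q\<in>U. G q $ m $ j = G q $ j $ m" using assms(3) symmetric_matrix_entry by blast
  then have "frechet_derivative (\<lambda>q. G q $ j $ m) (at p) =
      frechet_derivative (\<lambda>q. G q $ m $ j) (at p)"
    by (rule frechet_derivative_transform_open[OF assms(4,1,2)])
  then show ?thesis by (simp add: partial_def)
qed

lemma has_derivative_gm_LC:
  assumes "open U" "p \<in> U"
    and G_diff: "\<And>i j. (\<lambda>q. G q $ i $ j) differentiable (at p)"
    and G_sym: "\<forall>q\<in>U. transpose (G q) = G q"
    and G_inv: "G p ** matrix_inv (G p) = mat 1"
    and Y_diff: "Y differentiable (at p)" and Z_diff: "Z differentiable (at p)"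
  shows "((\<lambda>q. gm G q (Y q) (Z q)) has_derivative
     (\<lambda>X. gm G p (LC G Y p X) (Z p) + gm G p (Y p) (LC G Z p X))) (at p)"
proof -
  define DY where "DY = frechet_derivative Y (at p)"
  define DZ where "DZ = frechet_derivative Z (at p)"
  define DG where "DG j m = frechet_derivative (\<lambda>q. G q $ j $ m) (at p)" for j m
  have "((\<lambda>q. \<Sum>j\<in>UNIV. \<Sum>m\<in>UNIV. Y q $ j * G q $ j $ m * Z q $ m) has_derivative
     (\<lambda>h. \<Sum>j\<in>UNIV. \<Sum>m\<in>UNIV. (Y p $ j * G p $ j $ m) * (DZ h $ m)
        + (Y p $ j * DG j m h + DY h $ j * G p $ j $ m) * Z p $ m)) (at p)"
    unfolding DY_def DZ_def DG_def
    using has_derivative_vec_nth_frechet[OF Y_diff] has_derivative_vec_nth_frechet[OF Z_diff]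
      G_diff[THEN frechet_derivative_works[THEN iffD1]]
    by (intro has_derivative_sum has_derivative_mult)
  moreover have "(\<Sum>j\<in>UNIV. \<Sum>m\<in>UNIV. (Y p $ j * G p $ j $ m) * (DZ X $ m)
        + (Y p $ j * DG j m X + DY X $ j * G p $ j $ m) * Z p $ m)
     = gm G p (LC G Y p X) (Z p) + gm G p (Y p) (LC G Z p X)" for X
  proof -
    have partial_sym: "partial i (\<lambda>q. G q $ j $ m) p = partial i (\<lambda>q. G q $ m $ j) p" for i j m
      using partial_symmetric_matrix[OF assms(1,2) G_sym G_diff] .
    have DG: "DG j m X = (\<Sum>i\<in>UNIV. X $ i * partial i (\<lambda>q. G q $ j $ m) p)" for j m
      unfolding DG_def by (rule frechet_derivative_eq_partial_sum[OF G_diff])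
    have "gm G p (LC G Y p X) (Z p) + gm G p (Y p) (LC G Z p X)
      = gm G p (DY X) (Z p) + gm G p (Y p) (DZ X)
        + (gm G p (christoffel_form G p X (Y p)) (Z p)
          + gm G p (Y p) (christoffel_form G p X (Z p)))"
      by (simp add: LC_eq DY_def DZ_def gm_linear)
    also have "\<dots> = gm G p (DY X) (Z p) + gm G p (Y p) (DZ X)
        + (\<Sum>j\<in>UNIV. \<Sum>m\<in>UNIV. Y p $ j * DG j m X * Z p $ m)"
      using christoffel_form_metric_compatible[of G p, OF _ G_inv partial_sym] G_sym assms(2)
      by (simp add: DG)
    also have "\<dots> = (\<Sum>j\<in>UNIV. \<Sum>m\<in>UNIV. (Y p $ j * G p $ j $ m) * (DZ X $ m)
        + (Y p $ j * DG j m X + DY X $ j * G p $ j $ m) * Z p $ m)"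
      by (simp add: gm_expand sum.distrib algebra_simps)
    finally show ?thesis by simp
  qed
  moreover have "(\<lambda>q. gm G q (Y q) (Z q)) =
      (\<lambda>q. \<Sum>j\<in>UNIV. \<Sum>m\<in>UNIV. Y q $ j * G q $ j $ m * Z q $ m)"
    by (simp add: gm_expand)
  ultimately show ?thesis
    by simp
qed

lemma LC_tf_pointwise:
  assumes "\<And>i j. (\<lambda>q. A q $ i $ j) differentiable (at p)" and "Y differentiable (at p)"
  shows "LC_tf G A X Y p = LC_tf G A (\<lambda>_. X p) (\<lambda>_. Y p) p"
proof -
  define T where "T h = (\<chi> i. \<Sum>j\<in>UNIV. frechet_derivative (\<lambda>q. A q $ i $ j) (at p) h * Y p $ j)"
    for h
  have "frechet_derivative (\<lambda>q. A q *v Y q) (at p) h = T h + A p *v frechet_derivative Y (at p) h"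
    for h
    using fun_cong[OF frechet_derivative_at[OF has_derivative_matrix_vector_mult[OF assms]], of h]
    by (simp add: T_def)
  moreover have "frechet_derivative (\<lambda>q. A q *v Y p) (at p) h = T h" for h
    using fun_cong[OF frechet_derivative_at[OF has_derivative_matrix_vector_mult[OF assms(1),
        of "\<lambda>_. Y p"]], of h]
    by (simp add: T_def)
  ultimately show ?thesis
    by (simp add: LC_tf_def LC_eq matrix_vector_right_distrib)
qed

section \<open>The C12 structure on a chart\<close>

locale C12_chart =
  fixes U :: "vec3 set" and Phi :: "vec3 \<Rightarrow> real^3^3" and xi eta :: "vec3 \<Rightarrow> vec3"
    and G :: "vec3 \<Rightarrow> real^3^3"
  assumes open_U: "open U" and C12: "C12_manifold U Phi xi eta G"
begin

lemma almost_contact: "almost_contact_metric U Phi xi eta G"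
  using C12 unfolding C12_manifold_def by blast

lemma G_symmetric: "p \<in> U \<Longrightarrow> transpose (G p) = G p"
  using almost_contact unfolding almost_contact_metric_def riemannian_metric_def by blast

lemma gm_pos: "p \<in> U \<Longrightarrow> v \<noteq> 0 \<Longrightarrow> gm G p v v > 0"
  using almost_contact unfolding almost_contact_metric_def riemannian_metric_def by blast

lemma gm_sym: "p \<in> U \<Longrightarrow> gm G p u v = gm G p v u"
  using gm_commute G_symmetric by blast

lemma G_invertible: "p \<in> U \<Longrightarrow> invertible (G p)"
  using gm_pos invertible_if_gm_pos by blast

lemma G_differentiable: "p \<in> U \<Longrightarrow> (\<lambda>q. G q $ i $ j) differentiable (at p)"
  using almost_contact smooth_tf_differentiable
  unfolding almost_contact_metric_def riemannian_metric_def by blast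

lemma Phi_differentiable: "p \<in> U \<Longrightarrow> (\<lambda>q. Phi q $ i $ j) differentiable (at p)"
  using almost_contact smooth_tf_differentiable unfolding almost_contact_metric_def by blast

lemma xi_differentiable: "p \<in> U \<Longrightarrow> xi differentiable (at p)"
  using almost_contact smooth_vf_differentiable unfolding almost_contact_metric_def by blast

lemma
  assumes "p \<in> U"
  shows eta_xi: "eta p \<bullet> xi p = 1"
    and Phi_Phi: "Phi p *v (Phi p *v X) = - X + (eta p \<bullet> X) *\<^sub>R xi p"
    and Phi_xi: "Phi p *v xi p = 0"
    and eta_Phi: "eta p \<bullet> (Phi p *v X) = 0"
    and gm_xi: "gm G p X (xi p) = eta p \<bullet> X"
    and gm_Phi_left: "gm G p (Phi p *v X) Y = - gm G p X (Phi p *v Y)"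
proof -
  have "eta p \<bullet> xi p = 1"
    and PP: "\<forall>X. Phi p *v (Phi p *v X) = - X + (eta p \<bullet> X) *\<^sub>R xi p"
    and "\<forall>X Y. gm G p (Phi p *v X) (Phi p *v Y) = gm G p X Y - (eta p \<bullet> X) * (eta p \<bullet> Y)"
    using almost_contact assms unfolding almost_contact_metric_def by auto
  note algebra = almost_contact_algebra[OF this]
  show "eta p \<bullet> xi p = 1" by fact
  show "Phi p *v (Phi p *v X) = - X + (eta p \<bullet> X) *\<^sub>R xi p" using PP by blast
  show "Phi p *v xi p = 0" "eta p \<bullet> (Phi p *v X) = 0" "gm G p X (xi p) = eta p \<bullet> X"
    "gm G p (Phi p *v X) Y = - gm G p X (Phi p *v Y)"
    using algebra by blast+
qed

lemma has_derivative_gm: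
  assumes "p \<in> U" "Y differentiable (at p)" "Z differentiable (at p)"
  shows "((\<lambda>q. gm G q (Y q) (Z q)) has_derivative
     (\<lambda>X. gm G p (LC G Y p X) (Z p) + gm G p (Y p) (LC G Z p X))) (at p)"
  using has_derivative_gm_LC[OF open_U assms(1) G_differentiable[OF assms(1)]]
    G_symmetric matrix_inv_mult(1)[OF G_invertible[OF assms(1)]] assms(2,3)
  by blast

lemma gm_LC_locally_constant:
  assumes "p \<in> U" "Y differentiable (at p)" "Z differentiable (at p)"
    and "\<forall>q\<in>U. gm G q (Y q) (Z q) = c"
  shows "gm G p (LC G Y p X) (Z p) + gm G p (Y p) (LC G Z p X) = 0"
  using has_derivative_locally_constant[OF has_derivative_gm[OF assms(1-3)] open_U assms(1,4)]
  by (metis (no_types, lifting))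

lemma gm_LC_unit:
  assumes "p \<in> U" "Y differentiable (at p)" "\<forall>q\<in>U. gm G q (Y q) (Y q) = 1"
  shows "gm G p (LC G Y p X) (Y p) = 0"
  using gm_LC_locally_constant[OF assms(1,2,2,3), of X] gm_sym[OF assms(1)] by simp

lemma gm_LC_xi_xi:
  assumes "p \<in> U"
  shows "gm G p (LC G xi p X) (xi p) = 0"
proof -
  have "\<forall>q\<in>U. gm G q (xi q) (xi q) = 1" using gm_xi eta_xi by simp
  then show ?thesis using gm_LC_unit[OF assms xi_differentiable[OF assms]] by blast
qed

lemma omega_cov_eq:
  assumes "p \<in> U"
  shows "omega_cov G xi p = - (G p *v LC G xi p (xi p))"
proof -
  have "gm G p w (axis j 1) = (G p *v w) $ j" for w j
    using gm_sym[OF assms, of w "axis j 1"] by (simp add: gm_def inner_axis')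
  then show ?thesis by (simp add: omega_cov_def vec_eq_iff)
qed

lemma psi_eq: "p \<in> U \<Longrightarrow> psi_vf G xi p = - LC G xi p (xi p)"
  by (simp add: psi_vf_def omega_cov_eq linear_neg[OF matrix_vector_mul_linear]
      matrix_vector_mul_assoc matrix_inv_mult(2)[OF G_invertible])

lemma gm_psi_xi: "p \<in> U \<Longrightarrow> gm G p (psi_vf G xi p) (xi p) = 0"
  using psi_eq gm_LC_xi_xi by (simp add: gm_minus_left)

lemma christoffel_differentiable:
  assumes "p \<in> U"
  shows "(\<lambda>q. christoffel G q i j k) differentiable (at p)"
proof -
  have "(\<lambda>q. matrix_inv (G q) $ k $ l) differentiable (at p)" for k l
    using differentiable_matrix_inv_entry[OF open_U assms] G_invertible invertible_det_nz
      G_differentiable[OF assms] by blast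
  moreover have "partial m (\<lambda>q. G q $ i $ j) differentiable (at p)" for m i j
    using almost_contact assms smooth_fun_differentiable(2)
    unfolding almost_contact_metric_def riemannian_metric_def smooth_tf_def by blast
  ultimately show ?thesis
    unfolding christoffel_def
    by (intro differentiable_mult differentiable_const differentiable_sum ballI
        differentiable_add differentiable_diff) auto
qed

lemma LC_xi_xi_differentiable:
  assumes "p \<in> U"
  shows "(\<lambda>q. LC G xi q (xi q)) differentiable (at p)"
proof -
  define E where "E q = (\<chi> k. (\<Sum>i\<in>UNIV. xi q $ i * partial i (\<lambda>r. xi r $ k) q)
      + (\<Sum>i\<in>UNIV. \<Sum>j\<in>UNIV. christoffel G q i j k * xi q $ i * xi q $ j))" for q
  have xi_smooth: "smooth_fun U (\<lambda>q. xi q $ k)" for k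
    using almost_contact unfolding almost_contact_metric_def smooth_vf_def by blast
  have "E differentiable (at p)"
    unfolding E_def differentiable_vec_nth_iff
    using christoffel_differentiable smooth_fun_differentiable[OF xi_smooth] assms
    by (intro allI differentiable_add differentiable_sum differentiable_mult ballI) auto
  moreover have "\<forall>q\<in>U. E q = LC G xi q (xi q)"
  proof
    fix q
    assume q: "q \<in> U"
    then show "E q = LC G xi q (xi q)"
      using smooth_fun_differentiable(1)[OF xi_smooth q]
      by (simp add: E_def LC_def vec_eq_iff frechet_derivative_vec_nth[OF xi_differentiable[OF q]]
          frechet_derivative_eq_partial_sum)
  qed
  ultimately show ?thesis
    by (rule differentiable_transform_open[OF _ open_U assms])
qed

lemma psi_differentiable:
  assumes "p \<in> U"
  shows "psi_vf G xi differentiable (at p)"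
proof -
  have "(\<lambda>q. - LC G xi q (xi q)) differentiable (at p)"
    using LC_xi_xi_differentiable[OF assms] by (rule differentiable_minus)
  moreover have "\<forall>q\<in>U. - LC G xi q (xi q) = psi_vf G xi q"
    using psi_eq by simp
  ultimately show ?thesis
    by (rule differentiable_transform_open[OF _ open_U assms])
qed

lemma LC_Phi_horizontal:
  assumes "p \<in> U" "eta p \<bullet> X = 0" "Y differentiable (at p)"
  shows "LC G (\<lambda>q. Phi q *v Y q) p X = Phi p *v LC G Y p X"
proof -
  \<comment> \<open>The C12 identity is only assumed for smooth fields, so first pass to constant ones.\<close>
  have "LC_tf G Phi (\<lambda>_. X) Y p = LC_tf G Phi (\<lambda>_. X) (\<lambda>_. Y p) p"
    using LC_tf_pointwise[OF Phi_differentiable[OF assms(1)] assms(3)] by simp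
  also have "\<dots> = 0"
    using C12 assms(1,2) smooth_vf_const unfolding C12_manifold_def by simp
  finally show ?thesis by (simp add: LC_tf_def)
qed

lemma LC_xi_horizontal:
  assumes "p \<in> U" "eta p \<bullet> X = 0"
  shows "LC G xi p X = 0"
proof -
  define w where "w = LC G xi p X"
  have "frechet_derivative (\<lambda>q. Phi q *v xi q) (at p) = frechet_derivative (\<lambda>_. 0) (at p)"
    using Phi_xi open_U assms(1) by (intro frechet_derivative_transform_open) auto
  then have "LC G (\<lambda>q. Phi q *v xi q) p X = 0"
    using Phi_xi[OF assms(1)] by (simp add: LC_eq christoffel_form_def vec_eq_iff)
  then have "Phi p *v w = 0"
    using LC_Phi_horizontal[OF assms xi_differentiable[OF assms(1)]] by (simp add: w_def)
  moreover have "eta p \<bullet> w = 0"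
    using gm_LC_xi_xi[OF assms(1)] gm_xi[OF assms(1)] by (simp add: w_def)
  ultimately show ?thesis
    using Phi_Phi[OF assms(1), of w] by (simp add: w_def)
qed

end

locale C12_unit_horizontal = C12_chart +
  fixes V :: "vec3 \<Rightarrow> vec3"
  assumes V_differentiable: "p \<in> U \<Longrightarrow> V differentiable (at p)"
    and gm_V_V: "p \<in> U \<Longrightarrow> gm G p (V p) (V p) = 1"
    and gm_V_xi: "p \<in> U \<Longrightarrow> gm G p (V p) (xi p) = 0"
begin

lemma Phi_Phi_V: "p \<in> U \<Longrightarrow> Phi p *v (Phi p *v V p) = - V p"
  using Phi_Phi gm_xi gm_V_xi by simp

lemma orthonormal_frame:
  assumes "p \<in> U"
  shows "orthonormal3 G p (xi p) (V p) (Phi p *v V p)"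
proof -
  have "gm G p (Phi p *v V p) (Phi p *v V p) = 1"
    using gm_Phi_left[OF assms] Phi_Phi_V[OF assms] gm_V_V[OF assms] by (simp add: gm_linear)
  moreover have "gm G p (V p) (Phi p *v V p) = 0"
    using gm_Phi_left[OF assms, of "V p" "V p"] gm_sym[OF assms] by simp
  moreover have "gm G p (xi p) (Phi p *v V p) = 0"
    using gm_sym[OF assms, of "xi p"] gm_xi[OF assms] eta_Phi[OF assms] by simp
  ultimately show ?thesis
    unfolding orthonormal3_def
    using assms gm_V_V gm_V_xi gm_xi eta_xi gm_sym by simp
qed

lemma LC_PhiV_V:
  assumes "p \<in> U"
  defines "c \<equiv> Phi p *v V p"
  shows "LC G V p c = gm G p (LC G V p c) c *\<^sub>R c"
proof -
  have "LC G xi p c = 0"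
    using LC_xi_horizontal[OF assms(1)] eta_Phi[OF assms(1)] by (simp add: c_def)
  then have "gm G p (LC G V p c) (xi p) = 0"
    using gm_LC_locally_constant[OF assms(1) V_differentiable xi_differentiable, of 0 c] gm_V_xi
      assms(1) by (simp add: gm_zero_right)
  moreover have "gm G p (LC G V p c) (V p) = 0"
    using gm_LC_unit[OF assms(1) V_differentiable] gm_V_V assms(1) by blast
  ultimately show ?thesis
    using orthonormal3_expansion[OF G_symmetric orthonormal_frame, of p "LC G V p c"] assms(1)
      gm_sym[OF assms(1)] by (simp add: c_def)
qed

lemma divergence_eq:
  assumes "p \<in> U"
  defines "c \<equiv> Phi p *v V p"
  shows "divergence G V p = gm G p (V p) (psi_vf G xi p) + gm G p (LC G V p c) c"
proof -
  have "gm G p (LC G V p (xi p)) (xi p) = gm G p (V p) (psi_vf G xi p)"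
    using gm_LC_locally_constant[OF assms(1) V_differentiable xi_differentiable, of 0 "xi p"]
      gm_V_xi assms(1) psi_eq[OF assms(1)] by (simp add: gm_minus_right)
  moreover have "gm G p (LC G V p (V p)) (V p) = 0"
    using gm_LC_unit[OF assms(1) V_differentiable] gm_V_V assms(1) by blast
  ultimately show ?thesis
    unfolding divergence_def c_def
    using orthonormal3_trace[OF G_symmetric orthonormal_frame linear_LC[OF V_differentiable]]
      assms(1) by simp
qed

lemma LC_PhiV_PhiV:
  assumes "p \<in> U"
  defines "c \<equiv> Phi p *v V p"
  shows "LC G (\<lambda>q. Phi q *v V q) p c = - gm G p (LC G V p c) c *\<^sub>R V p"
proof -
  have "LC G (\<lambda>q. Phi q *v V q) p c = Phi p *v LC G V p c"
    using LC_Phi_horizontal[OF assms(1) _ V_differentiable[OF assms(1)]] eta_Phi[OF assms(1)]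
    by (simp add: c_def)
  also have "\<dots> = gm G p (LC G V p c) c *\<^sub>R (Phi p *v c)"
    using LC_PhiV_V[OF assms(1)] by (metis c_def matrix_vector_mult_scaleR)
  also have "Phi p *v c = - V p"
    using Phi_Phi_V[OF assms(1)] by (simp add: c_def)
  finally show ?thesis by simp
qed

end

lemma (in C12_chart) normalized_psi:
  assumes "\<forall>p\<in>U. psi_vf G xi p \<noteq> 0"
    and "\<forall>p\<in>U. exp (rho p) = sqrt (gm G p (psi_vf G xi p) (psi_vf G xi p))"
    and "\<forall>p\<in>U. V p = exp (- rho p) *\<^sub>R psi_vf G xi p"
  shows "C12_unit_horizontal U Phi xi eta G V"
    and "p \<in> U \<Longrightarrow> gm G p (V p) (psi_vf G xi p) = exp (rho p)"
proof -
  have norm_psi: "gm G q (psi_vf G xi q) (psi_vf G xi q) = exp (rho q) ^ 2" if "q \<in> U" for q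
  proof -
    have "gm G q (psi_vf G xi q) (psi_vf G xi q) > 0" using gm_pos[OF that] assms(1) that by blast
    then show ?thesis using assms(2) that by simp
  qed
  have "\<forall>q\<in>U. (1 / sqrt (gm G q (psi_vf G xi q) (psi_vf G xi q))) *\<^sub>R psi_vf G xi q = V q"
    using assms(2,3) by (simp add: exp_minus divide_inverse)
  moreover have "(\<lambda>q. (1 / sqrt (gm G q (psi_vf G xi q) (psi_vf G xi q))) *\<^sub>R psi_vf G xi q)
      differentiable (at q)" if q: "q \<in> U" for q
  proof -
    obtain D where "((\<lambda>q. gm G q (psi_vf G xi q) (psi_vf G xi q)) has_derivative D) (at q)"
      using has_derivative_gm[OF q psi_differentiable[OF q] psi_differentiable[OF q]] by blast
    then have "(\<lambda>q. 1 / sqrt (gm G q (psi_vf G xi q) (psi_vf G xi q))) differentiable (at q)"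
      using norm_psi[OF q] unfolding differentiable_def
      by (intro exI) (auto intro!: derivative_eq_intros)
    then show ?thesis
      using psi_differentiable[OF q] by (rule differentiable_scaleR)
  qed
  ultimately have "V differentiable (at q)" if "q \<in> U" for q
    using differentiable_transform_open[OF _ open_U that] that by blast
  moreover have "gm G q (V q) (V q) = 1" if "q \<in> U" for q
    using assms(3) norm_psi[OF that] that
    by (simp add: gm_linear power2_eq_square exp_minus field_simps)
  moreover have "gm G q (V q) (xi q) = 0" if "q \<in> U" for q
    using assms(3) gm_psi_xi[OF that] that by (simp add: gm_linear)
  ultimately show "C12_unit_horizontal U Phi xi eta G V"
    by unfold_locales
  show "gm G p (V p) (psi_vf G xi p) = exp (rho p)" if "p \<in> U"
    using assms(3) norm_psi[OF that] that
    by (simp add: gm_linear power2_eq_square exp_minus field_simps)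
qed

theorem lemma4p3:
  fixes U :: "(real^3) set" and Phi G :: "real^3 \<Rightarrow> real^3^3" and xi eta :: "real^3 \<Rightarrow> real^3"
    and rho :: "real^3 \<Rightarrow> real" and V :: "real^3 \<Rightarrow> real^3"
  assumes "open U"
    and "C12_manifold U Phi xi eta G"
    and "closed_form U (omega_cov G xi)"
    and "\<forall>p\<in>U. psi_vf G xi p \<noteq> 0"
    and "\<forall>p\<in>U. exp (rho p) = sqrt (gm G p (psi_vf G xi p) (psi_vf G xi p))"
    and "\<forall>p\<in>U. V p = exp (- rho p) *\<^sub>R psi_vf G xi p"
  shows "\<forall>p\<in>U. LC G V p (Phi p *v V p) = (- exp (rho p) + divergence G V p) *\<^sub>R (Phi p *v V p) \<and>
      LC G (\<lambda>q. Phi q *v V q) p (Phi p *v V p) = (exp (rho p) - divergence G V p) *\<^sub>R V p"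
proof -
  interpret C12_chart U Phi xi eta G
    using assms(1,2) by unfold_locales
  interpret C12_unit_horizontal U Phi xi eta G V
    using normalized_psi(1)[OF assms(4-6)] .
  have "divergence G V p = exp (rho p) + gm G p (LC G V p (Phi p *v V p)) (Phi p *v V p)"
    if "p \<in> U" for p
    using divergence_eq[OF that] normalized_psi(2)[OF assms(4-6) that] by simp
  with LC_PhiV_V LC_PhiV_PhiV show ?thesis
    by simp
qed

end
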